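(* Let $\Omega\subset\mathbb{R}^d$, let $y:\Omega\to\mathbb{R}^m$ be a forward model, let $\pi(p)$ be a prior probability density on $\Omega$, let $y^m\in\mathbb{R}^m$, and let $\Sigma\in\mathbb{R}^{m\times m}$ be symmetric positive definite. Define $\pi(y^m\mid p)=(2\pi)^{-m/2}\det(\Sigma^2)^{-1/2}\exp(-\tfrac12\|y^m-y(p)\|_{\Sigma^{-2}}^2)$, $\pi(y^m)=\int_\Omega\pi(p)\pi(y^m\mid p)\,dp$, and $\pi(p\mid y^m)=\pi(p)\pi(y^m\mid p)/\pi(y^m)$. Let $\bar y:\Omega\to\mathbb{R}^m$ and $\Gamma:\Omega\to\mathbb{R}^{m\times m}$ (with $\Gamma(p)$ symmetric positive semidefinite) be the surrogate predictive mean and covariance, $L_{\mathcal D}(p)=(2\pi)^{-m/2}\det(\Sigma^2+\Gamma(p))^{-1/2}\exp(-\tfrac12\|y^m-\bar y(p)\|_{(\Sigma^2+\Gamma(p))^{-1}}^2)$, $\pi_{\mathcal D}(y^m)=\int_\Omega\pi(p)L_{\mathcal D}(p)\,dp$, and $\pi(p\mid y^m,\mathcal D)=\pi(p)L_{\mathcal D}(p)/\pi_{\mathcal D}(y^m)$. Assume $\pi_{\mathcal D}(y^m)\le\alpha\,\pi(y^m)$ for some $\alpha<\infty$. Let $\phi(a,b)=\tfrac12a+b\sqrt a$ and $$\psi(y^m,p)=\tfrac12\operatorname{tr}\big(\Sigma^{-2}\Gamma(p)\big)+\phi\Big(\|\bar y(p)-y(p)\|_{\Sigma^{-2}}^2,\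 \|y^m-y(p)\|_{\Sigma^{-2}}\Big)+\log\alpha.$$ Then $$\int_\Omega\pi(p\mid y^m)\,\|y(p)-\bar y(p)\|_2^2\,dp\le\int_\Omega\pi(p\mid y^m,\mathcal D)\,\|y(p)-\bar y(p)\|_2^2\exp\big(\psi(y^m,p)\big)\,dp.$$
   Context: For a symmetric positive definite matrix $M$, $\|x\|_M=\sqrt{x^TMx}$; $\|\cdot\|_2$ is the Euclidean norm. The left-hand side is the posterior-weighted squared $L^2$ distance $\|y-\bar y\|^2_{L^2(\Omega;\pi(\cdot\mid y^m))}$. *)

theory Defs
  imports "HOL-Analysis.Analysis"
begin

definition wnorm :: "real^'m^'m \<Rightarrow> real^'m \<Rightarrow> real" where
  "wnorm M x = sqrt (x \<bullet> (M *v x))"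

definition gauss_lik :: "real^'m^'m \<Rightarrow> real^'m \<Rightarrow> real" where
  "gauss_lik C r = (2 * pi) powr (- real CARD('m) / 2) * det C powr (- 1 / 2)
                   * exp (- (1 / 2) * (wnorm (matrix_inv C) r)\<^sup>2)"

definition lik :: "real^'m^'m \<Rightarrow> ('d \<Rightarrow> real^'m) \<Rightarrow> real^'m \<Rightarrow> 'd \<Rightarrow> real" where
  "lik \<Sigma> y ym p = gauss_lik (\<Sigma> ** \<Sigma>) (ym - y p)"

definition likD :: "real^'m^'m \<Rightarrow> ('d \<Rightarrow> real^'m) \<Rightarrow> ('d \<Rightarrow> real^'m^'m) \<Rightarrow> real^'m \<Rightarrow> 'd \<Rightarrow> real" where
  "likD \<Sigma> ybar \<Gamma> ym p = gauss_lik (\<Sigma> ** \<Sigma> + \<Gamma> p) (ym - ybar p)"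

definition evidence :: "('d::euclidean_space) set \<Rightarrow> ('d \<Rightarrow> real) \<Rightarrow> real^'m^'m \<Rightarrow> ('d \<Rightarrow> real^'m) \<Rightarrow> real^'m \<Rightarrow> real" where
  "evidence \<Omega> prior \<Sigma> y ym = (LINT p:\<Omega>|lborel. prior p * lik \<Sigma> y ym p)"

definition evidenceD :: "('d::euclidean_space) set \<Rightarrow> ('d \<Rightarrow> real) \<Rightarrow> real^'m^'m \<Rightarrow> ('d \<Rightarrow> real^'m) \<Rightarrow> ('d \<Rightarrow> real^'m^'m) \<Rightarrow> real^'m \<Rightarrow> real" where
  "evidenceD \<Omega> prior \<Sigma> ybar \<Gamma> ym = (LINT p:\<Omega>|lborel. prior p * likD \<Sigma> ybar \<Gamma> ym p)"

definition posterior :: "('d::euclidean_space) set \<Rightarrow> ('d \<Rightarrow> real) \<Rightarrow> real^'m^'m \<Rightarrow> ('d \<Rightarrow> real^'m) \<Rightarrow> real^'m \<Rightarrow> 'd \<Rightarrow> real" where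
  "posterior \<Omega> prior \<Sigma> y ym p = prior p * lik \<Sigma> y ym p / evidence \<Omega> prior \<Sigma> y ym"

definition posteriorD :: "('d::euclidean_space) set \<Rightarrow> ('d \<Rightarrow> real) \<Rightarrow> real^'m^'m \<Rightarrow> ('d \<Rightarrow> real^'m) \<Rightarrow> ('d \<Rightarrow> real^'m^'m) \<Rightarrow> real^'m \<Rightarrow> 'd \<Rightarrow> real" where
  "posteriorD \<Omega> prior \<Sigma> ybar \<Gamma> ym p = prior p * likD \<Sigma> ybar \<Gamma> ym p / evidenceD \<Omega> prior \<Sigma> ybar \<Gamma> ym"

definition phi :: "real \<Rightarrow> real \<Rightarrow> real" where
  "phi a b = a / 2 + b * sqrt a"

definition psi :: "real^'m^'m \<Rightarrow> ('d \<Rightarrow> real^'m) \<Rightarrow> ('d \<Rightarrow> real^'m) \<Rightarrow> ('d \<Rightarrow> real^'m^'m) \<Rightarrow> real \<Rightarrow> real^'m \<Rightarrow> 'd \<Rightarrow> real" where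
  "psi \<Sigma> y ybar \<Gamma> \<alpha> ym p =
     1 / 2 * trace (matrix_inv (\<Sigma> ** \<Sigma>) ** \<Gamma> p)
     + phi ((wnorm (matrix_inv (\<Sigma> ** \<Sigma>)) (ybar p - y p))\<^sup>2) (wnorm (matrix_inv (\<Sigma> ** \<Sigma>)) (ym - y p))
     + ln \<alpha>"

end

theory Submission
  imports Defs
begin

text \<open>
  Pointwise, the exact likelihood is bounded by the surrogate one times exp (psi - ln alpha).
  With A = Sigma Sigma and C = Sigma^-1 Gamma Sigma^-1, which is positive semidefinite,
  det (A + Gamma) / det A = det (I + C) lies between 1 and exp (tr C) = exp (tr (A^-1 Gamma)),
  as one sees by diagonalising C. The quadratic form of (A + Gamma)^-1 is dominated by that of
  A^-1, namely |Sigma^-1 _|^2, and the triangle inequality for |Sigma^-1 _| relates the residuals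
  ym - ybar and ym - y, which produces phi. Dividing by the evidences and using
  pi_D(ym) <= alpha pi(ym) gives the inequality between the weighted posterior densities, which
  then integrates. Both evidences are positive because the likelihoods are positive, bounded and
  measurable, and the prior has positive mass.
\<close>

section \<open>Symmetric and invertible matrices\<close>

lemma symmetric_matrix_inner_commute:
  fixes C :: "real^'n^'n"
  assumes "transpose C = C"
  shows "(C *v x) \<bullet> y = x \<bullet> (C *v y)"
  by (metis assms dot_lmul_matrix vector_transpose_matrix)

lemma matrix_add_rdistrib:
  fixes A B C :: "'a::semiring_1^'n^'n"
  shows "(B + C) ** A = B ** A + C ** A"
  by (simp add: vec_eq_iff matrix_matrix_mult_def sum.distrib distrib_right)

lemma matrix_inv_right:
  fixes A :: "'a::field^'n^'n"
  assumes "invertible A"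
  shows "A ** matrix_inv A = mat 1"
  using someI_ex[OF assms[unfolded invertible_def]] by (simp add: matrix_inv_def)

lemma matrix_inv_left:
  fixes A :: "'a::field^'n^'n"
  assumes "invertible A"
  shows "matrix_inv A ** A = mat 1"
  using matrix_inv_right[OF assms] matrix_left_right_inverse by blast

lemma matrix_inv_unique:
  fixes A B :: "'a::field^'n^'n"
  assumes "A ** B = mat 1"
  shows "matrix_inv A = B"
proof -
  have inv: "invertible A"
    using assms invertible_right_inverse by blast
  have "matrix_inv A = matrix_inv A ** (A ** B)" using assms by simp
  also have "\<dots> = B" by (simp add: matrix_mul_assoc matrix_inv_left[OF inv])
  finally show ?thesis .
qed

lemma symmetric_matrix_inv:
  fixes S :: "'a::field^'n^'n"
  assumes "transpose S = S" "invertible S"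
  shows "transpose (matrix_inv S) = matrix_inv S"
  by (metis assms matrix_inv_right matrix_inv_unique matrix_left_right_inverse
      matrix_transpose_mul transpose_mat)

lemma matrix_inv_square:
  fixes S :: "real^'n^'n"
  assumes "invertible S"
  shows "matrix_inv (S ** S) = matrix_inv S ** matrix_inv S"
proof (rule matrix_inv_unique)
  have "S ** S ** (matrix_inv S ** matrix_inv S) = S ** (S ** matrix_inv S) ** matrix_inv S"
    by (simp add: matrix_mul_assoc)
  then show "S ** S ** (matrix_inv S ** matrix_inv S) = mat 1"
    by (simp add: matrix_inv_right[OF assms])
qed

lemma pos_def_matrix_invertible:
  fixes M :: "real^'n^'n"
  assumes "\<And>x. x \<noteq> 0 \<Longrightarrow> 0 < x \<bullet> (M *v x)"
  shows "invertible M"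
proof -
  have "M *v x = 0 \<Longrightarrow> x = 0" for x
    using assms[of x] by force
  then have "inj ((*v) M)"
    by (simp add: linear_injective_0)
  then show ?thesis
    by (metis matrix_left_invertible_injective invertible_left_inverse)
qed

lemma det_square_pos:
  fixes S :: "real^'n^'n"
  assumes "invertible S"
  shows "0 < det (S ** S)"
  using assms by (metis det_mul invertible_det_nz not_real_square_gt_zero)

section \<open>Spectral decomposition of symmetric matrices\<close>

lemma nonneg_quadratic_linear_coeff_eq_0:
  fixes a b :: real
  assumes "\<And>t. 2 * a * t \<le> b * t\<^sup>2"
  shows "a = 0"
proof (rule ccontr)
  assume "a \<noteq> 0"
  define c where "c = \<bar>b\<bar> + 1"
  have "c > 0" by (simp add: c_def add_nonneg_pos)
  have "2 * a * (a / c) * c\<^sup>2 \<le> b * (a / c)\<^sup>2 * c\<^sup>2"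
    using assms[of "a / c"] by (intro mult_right_mono) auto
  then have "2 * a\<^sup>2 * c \<le> b * a\<^sup>2"
    using \<open>c > 0\<close> by (simp add: power2_eq_square field_simps)
  moreover have "0 < a\<^sup>2" using \<open>a \<noteq> 0\<close> by simp
  ultimately have "2 * c \<le> b"
    by (simp add: mult.commute)
  then show False by (simp add: c_def)
qed

lemma rayleigh_quotient_max_exists:
  fixes C :: "real^'n^'n"
  assumes "subspace S" "S \<noteq> {0}"
  obtains u where "u \<in> S" "norm u = 1" "\<And>v. v \<in> S \<Longrightarrow> v \<bullet> (C *v v) \<le> (u \<bullet> (C *v u)) * (v \<bullet> v)"
proof -
  define K where "K = S \<inter> sphere 0 1"
  obtain x where "x \<in> S" "x \<noteq> 0"
    using assms subspace_0 by blast
  then have "x /\<^sub>R norm x \<in> K"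
    using assms(1) by (simp add: K_def subspace_scale)
  moreover have "compact K"
    unfolding K_def using closed_subspace[OF assms(1)] by (simp add: closed_Int_compact)
  moreover have "continuous_on K (\<lambda>v. v \<bullet> (C *v v))"
    by (intro continuous_intros linear_continuous_on matrix_vector_mul_linear)
  ultimately obtain u where u: "u \<in> K" and max: "\<And>v. v \<in> K \<Longrightarrow> v \<bullet> (C *v v) \<le> u \<bullet> (C *v u)"
    using continuous_attains_sup[of K] by blast
  have "v \<bullet> (C *v v) \<le> (u \<bullet> (C *v u)) * (v \<bullet> v)" if "v \<in> S" for v
  proof (cases "v = 0")
    case False
    then have "v /\<^sub>R norm v \<in> K"
      using that assms(1) by (simp add: K_def subspace_scale)
    then have "(v /\<^sub>R norm v) \<bullet> (C *v (v /\<^sub>R norm v)) \<le> u \<bullet> (C *v u)"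
      by (rule max)
    then have "(v \<bullet> (C *v v)) / (norm v)\<^sup>2 \<le> u \<bullet> (C *v u)"
      by (simp add: matrix_vector_mult_scaleR power2_eq_square divide_inverse ac_simps)
    then show ?thesis
      using False by (simp add: divide_le_eq dot_square_norm)
  qed simp
  moreover have "u \<in> S" "norm u = 1"
    using u by (auto simp: K_def)
  ultimately show thesis
    using that by blast
qed

lemma rayleigh_quotient_max_eigenvector:
  fixes C :: "real^'n^'n"
  assumes sym: "transpose C = C" and S: "subspace S" "\<And>x. x \<in> S \<Longrightarrow> C *v x \<in> S"
    and u: "u \<in> S" "norm u = 1"
    and max: "\<And>v. v \<in> S \<Longrightarrow> v \<bullet> (C *v v) \<le> l * (v \<bullet> v)"
    and l: "l = u \<bullet> (C *v u)"
  shows "C *v u = l *\<^sub>R u"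
proof -
  define w where "w = C *v u - l *\<^sub>R u"
  have uu: "u \<bullet> u = 1"
    using u(2) by (simp add: dot_square_norm)
  have "w \<in> S"
    unfolding w_def using S u(1) by (simp add: subspace_diff subspace_scale)
  have wu: "w \<bullet> u = 0"
    unfolding w_def using uu l by (simp add: inner_diff_left inner_commute[of "C *v u" u])
  \<comment> \<open>maximality at u in the direction w kills the first-order term\<close>
  have "2 * (w \<bullet> (C *v u)) * t \<le> (l * (w \<bullet> w) - w \<bullet> (C *v w)) * t\<^sup>2" for t
  proof -
    have "u + t *\<^sub>R w \<in> S"
      using u(1) \<open>w \<in> S\<close> S(1) by (simp add: subspace_add subspace_scale)
    then have le: "(u + t *\<^sub>R w) \<bullet> (C *v (u + t *\<^sub>R w))
        \<le> l * ((u + t *\<^sub>R w) \<bullet> (u + t *\<^sub>R w))"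
      by (rule max)
    have expand: "(u + t *\<^sub>R w) \<bullet> (C *v (u + t *\<^sub>R w))
        = l + 2 * t * (w \<bullet> (C *v u)) + t\<^sup>2 * (w \<bullet> (C *v w))"
      using symmetric_matrix_inner_commute[OF sym, of u w] l
      by (simp add: power2_eq_square algebra_simps inner_commute)
    have norm_expand: "(u + t *\<^sub>R w) \<bullet> (u + t *\<^sub>R w) = 1 + t\<^sup>2 * (w \<bullet> w)"
      using uu wu by (simp add: inner_add_left inner_add_right power2_eq_square inner_commute)
    show ?thesis
      using le unfolding expand norm_expand by (simp add: algebra_simps)
  qed
  then have "w \<bullet> (C *v u) = 0"
    by (rule nonneg_quadratic_linear_coeff_eq_0)
  moreover have "w \<bullet> w = w \<bullet> (C *v u) - l * (w \<bullet> u)"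
    by (simp add: w_def algebra_simps)
  ultimately have "w = 0"
    using wu by simp
  then show ?thesis
    by (simp add: w_def)
qed

lemma symmetric_matrix_invariant_subspace_eigenbasis:
  fixes C :: "real^'n^'n"
  assumes sym: "transpose C = C"
  shows "subspace S \<Longrightarrow> (\<And>x. x \<in> S \<Longrightarrow> C *v x \<in> S) \<Longrightarrow>
    \<exists>B. B \<subseteq> S \<and> pairwise orthogonal B \<and> (\<forall>b\<in>B. norm b = 1) \<and> span B = S
       \<and> (\<forall>b\<in>B. \<exists>c. C *v b = c *\<^sub>R b)"
proof (induction "dim S" arbitrary: S rule: less_induct)
  case (less S)
  show ?case
  proof (cases "S = {0}")
    case True
    then show ?thesis by (intro exI[of _ "{}"]) auto
  next
    case False
    obtain u where u: "u \<in> S" "norm u = 1"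
      and max: "\<And>v. v \<in> S \<Longrightarrow> v \<bullet> (C *v v) \<le> (u \<bullet> (C *v u)) * (v \<bullet> v)"
      using rayleigh_quotient_max_exists[OF less.prems(1) False] by blast
    obtain l where eig: "C *v u = l *\<^sub>R u"
      using rayleigh_quotient_max_eigenvector[OF sym less.prems u max refl] by blast
    have uu: "u \<bullet> u = 1"
      using u(2) by (simp add: dot_square_norm)
    define T where "T = {v \<in> S. v \<bullet> u = 0}"
    have T: "subspace T"
      using less.prems(1) by (auto simp: T_def subspace_def inner_add_left)
    have T_invariant: "C *v v \<in> T" if "v \<in> T" for v
      using that less.prems(2) eig symmetric_matrix_inner_commute[OF sym, of v u]
      by (simp add: T_def)
    have "span T \<subset> span S"
      using T less.prems(1) u(1) uu
      by (metis (mono_tags) T_def mem_Collect_eq psubsetI span_eq_iff subsetI zero_neq_one)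
    then obtain B where B: "B \<subseteq> T" "pairwise orthogonal B" "\<forall>b\<in>B. norm b = 1" "span B = T"
        "\<forall>b\<in>B. \<exists>c. C *v b = c *\<^sub>R b"
      using less.hyps[OF dim_psubset T T_invariant] by blast
    show ?thesis
    proof (intro exI[of _ "insert u B"] conjI)
      show sub: "insert u B \<subseteq> S"
        using B(1) u(1) by (auto simp: T_def)
      show "pairwise orthogonal (insert u B)"
        using B(1,2) unfolding pairwise_insert by (auto simp: T_def orthogonal_def inner_commute)
      show "\<forall>b\<in>insert u B. norm b = 1"
        using B(3) u(2) by blast
      show "\<forall>b\<in>insert u B. \<exists>c. C *v b = c *\<^sub>R b"
        using B(5) eig by blast
      have "s \<in> span (insert u B)" if "s \<in> S" for s
      proof -
        have "s - (s \<bullet> u) *\<^sub>R u \<in> T"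
          using that u(1) uu less.prems(1)
          by (simp add: T_def subspace_diff subspace_scale inner_diff_left)
        then show ?thesis
          using B(4) span_breakdown_eq by blast
      qed
      then show "span (insert u B) = S"
        using span_minimal[OF sub less.prems(1)] by blast
    qed
  qed
qed

definition diag_matrix :: "('n \<Rightarrow> 'a::zero) \<Rightarrow> 'a^'n^'n" where
  "diag_matrix d = (\<chi> i j. if i = j then d i else 0)"

lemma transpose_mult_mult_entry:
  fixes C Q :: "real^'n^'n"
  shows "(transpose Q ** C ** Q) $ i $ j = column i Q \<bullet> (C *v column j Q)"
proof -
  have "(transpose Q ** C ** Q) $ i $ j = (\<Sum>k\<in>UNIV. \<Sum>l\<in>UNIV. Q $ l $ i * C $ l $ k * Q $ k $ j)"
    by (simp add: matrix_matrix_mult_def transpose_def sum_distrib_right)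
  also have "\<dots> = (\<Sum>l\<in>UNIV. \<Sum>k\<in>UNIV. Q $ l $ i * C $ l $ k * Q $ k $ j)"
    by (rule sum.swap)
  also have "\<dots> = column i Q \<bullet> (C *v column j Q)"
    by (simp add: matrix_vector_mult_def column_def inner_vec_def sum_distrib_left mult.assoc)
  finally show ?thesis .
qed

lemma symmetric_matrix_diagonalizable:
  fixes C :: "real^'n^'n"
  assumes "transpose C = C"
  obtains Q d where "orthogonal_matrix Q" "transpose Q ** C ** Q = diag_matrix d"
proof -
  obtain B where B: "pairwise orthogonal B" "\<forall>b\<in>B. norm b = 1" "span B = UNIV"
      "\<forall>b\<in>B. \<exists>c. C *v b = c *\<^sub>R b"
    using symmetric_matrix_invariant_subspace_eigenbasis[OF assms, of UNIV] by auto
  obtain ev where ev: "\<And>b. b \<in> B \<Longrightarrow> C *v b = ev b *\<^sub>R b"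
    using B(4) by metis
  have "independent B"
    using B(1,2) pairwise_orthogonal_independent by force
  then have "finite B" "card B = CARD('n)"
    using B(3) basis_card_eq_dim[of B UNIV] by (auto simp: finiteI_independent)
  then obtain g where g: "bij_betw g (UNIV :: 'n set) B"
    by (metis finite_class.finite_UNIV finite_same_card_bij)
  define Q :: "real^'n^'n" where "Q = (\<chi> i j. g j $ i)"
  have col: "column j Q = g j" for j
    by (simp add: Q_def column_def)
  have gB: "g j \<in> B" for j
    using g by (auto simp: bij_betw_def)
  have g_orth: "orthogonal (g i) (g j)" if "i \<noteq> j" for i j
  proof -
    have "g i \<noteq> g j"
      using g that by (auto simp: bij_betw_def inj_def)
    then show ?thesis
      using B(1) gB[of i] gB[of j] unfolding pairwise_def by blast
  qed
  show thesis
  proof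
    show "orthogonal_matrix Q"
      using B(2) gB g_orth by (simp add: orthogonal_matrix_orthonormal_columns col)
    show "transpose Q ** C ** Q = diag_matrix (\<lambda>j. ev (g j))"
      using B(2) gB g_orth
      by (simp add: vec_eq_iff transpose_mult_mult_entry col ev diag_matrix_def
          orthogonal_def norm_eq_1)
  qed
qed

lemma det_one_add_psd_bounds:
  fixes C :: "real^'n^'n"
  assumes sym: "transpose C = C" and psd: "\<And>x. 0 \<le> x \<bullet> (C *v x)"
  shows "1 \<le> det (mat 1 + C)" and "det (mat 1 + C) \<le> exp (trace C)"
proof -
  obtain Q d where Q: "orthogonal_matrix Q" and diag: "transpose Q ** C ** Q = diag_matrix d"
    using symmetric_matrix_diagonalizable[OF sym] by blast
  have d_nonneg: "0 \<le> d j" for j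
    using transpose_mult_mult_entry[of Q C j j] psd by (simp add: diag diag_matrix_def)
  have "det (mat 1 + C) = det (transpose Q) * det Q * det (mat 1 + C)"
    using Q by (metis det_I det_mul mult_1 orthogonal_matrix_def)
  also have "\<dots> = det (transpose Q ** (mat 1 + C) ** Q)"
    by (simp add: det_mul ac_simps)
  also have "transpose Q ** (mat 1 + C) ** Q = mat 1 + diag_matrix d"
    using Q by (simp add: matrix_add_ldistrib matrix_add_rdistrib diag orthogonal_matrix_def)
  finally have det_eq: "det (mat 1 + C) = (\<Prod>j\<in>UNIV. 1 + d j)"
    by (subst (asm) det_diagonal) (auto simp: diag_matrix_def mat_def)
  have "trace C = trace (transpose Q ** (C ** Q))"
    using Q by (metis matrix_mul_assoc matrix_mul_rid orthogonal_matrix_def trace_mul_sym)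
  then have trace_eq: "trace C = (\<Sum>j\<in>UNIV. d j)"
    by (simp add: matrix_mul_assoc diag trace_def diag_matrix_def)
  show "1 \<le> det (mat 1 + C)"
    unfolding det_eq using d_nonneg by (intro prod_ge_1) auto
  have "(\<Prod>j\<in>UNIV. 1 + d j) \<le> (\<Prod>j\<in>UNIV. exp (d j))"
    using d_nonneg by (intro prod_mono) auto
  then show "det (mat 1 + C) \<le> exp (trace C)"
    by (simp add: det_eq trace_eq exp_sum)
qed

section \<open>Perturbing a Gaussian covariance by a positive semidefinite matrix\<close>

lemma det_add_psd_bounds:
  fixes S B :: "real^'n^'n"
  assumes S: "transpose S = S" "invertible S"
    and B: "transpose B = B" "\<And>x. 0 \<le> x \<bullet> (B *v x)"
  shows "det (S ** S) \<le> det (S ** S + B)"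
    and "det (S ** S + B) \<le> det (S ** S) * exp (trace (matrix_inv (S ** S) ** B))"
proof -
  define Si where "Si = matrix_inv S"
  define C where "C = Si ** B ** Si"
  have Si: "transpose Si = Si" "S ** Si = mat 1" "Si ** S = mat 1"
    using symmetric_matrix_inv[OF S] matrix_inv_right[OF S(2)] matrix_inv_left[OF S(2)]
    by (simp_all add: Si_def)
  have C_sym: "transpose C = C"
    by (simp add: C_def matrix_transpose_mul Si(1) B(1) matrix_mul_assoc)
  have C_psd: "0 \<le> x \<bullet> (C *v x)" for x
    using B(2)[of "Si *v x"] symmetric_matrix_inner_commute[OF Si(1), of x]
    by (simp add: C_def matrix_vector_mul_assoc[symmetric])
  have "S ** C ** S = (S ** Si) ** B ** (Si ** S)"
    by (simp add: C_def matrix_mul_assoc)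
  then have "S ** S + B = S ** (mat 1 + C) ** S"
    by (simp add: Si matrix_add_ldistrib matrix_add_rdistrib)
  then have det_eq: "det (S ** S + B) = det (S ** S) * det (mat 1 + C)"
    by (simp add: det_mul)
  have "trace C = trace ((B ** Si) ** Si)"
    unfolding C_def by (metis matrix_mul_assoc trace_mul_sym)
  then have trace_eq: "trace (matrix_inv (S ** S) ** B) = trace C"
    by (metis Si_def matrix_inv_square[OF S(2)] matrix_mul_assoc trace_mul_sym)
  have pos: "0 < det (S ** S)"
    using det_square_pos[OF S(2)] .
  show "det (S ** S) \<le> det (S ** S + B)"
    using det_one_add_psd_bounds(1)[OF C_sym C_psd] pos by (simp add: det_eq)
  show "det (S ** S + B) \<le> det (S ** S) * exp (trace (matrix_inv (S ** S) ** B))"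
    using det_one_add_psd_bounds(2)[OF C_sym C_psd] pos by (simp add: det_eq trace_eq)
qed

lemma wnorm_matrix_inv_square:
  fixes S :: "real^'n^'n"
  assumes "transpose S = S" "invertible S"
  shows "wnorm (matrix_inv (S ** S)) x = norm (matrix_inv S *v x)"
proof -
  have "x \<bullet> (matrix_inv (S ** S) *v x) = (matrix_inv S *v x) \<bullet> (matrix_inv S *v x)"
    using symmetric_matrix_inner_commute[OF symmetric_matrix_inv[OF assms], of x]
    by (simp add: matrix_inv_square[OF assms(2)] matrix_vector_mul_assoc[symmetric])
  then show ?thesis
    by (simp add: wnorm_def norm_eq_sqrt_inner)
qed

lemma inner_matrix_inv_add_psd_bounds:
  fixes S B :: "real^'n^'n"
  assumes S: "transpose S = S" "invertible S"
    and B: "transpose B = B" "\<And>x. 0 \<le> x \<bullet> (B *v x)"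
  shows "0 \<le> x \<bullet> (matrix_inv (S ** S + B) *v x)"
    and "x \<bullet> (matrix_inv (S ** S + B) *v x) \<le> (norm (matrix_inv S *v x))\<^sup>2"
proof -
  define v where "v = matrix_inv (S ** S + B) *v x"
  have "invertible (S ** S + B)"
    using det_square_pos[OF S(2)] det_add_psd_bounds(1)[OF S B] by (simp add: invertible_det_nz)
  then have "(S ** S + B) *v v = x"
    by (simp add: v_def matrix_vector_mul_assoc matrix_inv_right)
  then have "x \<bullet> v = (S *v v) \<bullet> (S *v v) + v \<bullet> (B *v v)"
    using symmetric_matrix_inner_commute[OF S(1), of "S *v v" v]
    by (auto simp: matrix_vector_mult_add_rdistrib matrix_vector_mul_assoc[symmetric]
        inner_add_left inner_commute[of "B *v v" v])
  then have Sv_le: "(norm (S *v v))\<^sup>2 \<le> x \<bullet> v"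
    using B(2)[of v] by (simp add: dot_square_norm)
  then show "0 \<le> x \<bullet> (matrix_inv (S ** S + B) *v x)"
    unfolding v_def by (meson order_trans zero_le_power2)
  have "x \<bullet> v = (matrix_inv S *v x) \<bullet> (S *v v)"
    using symmetric_matrix_inner_commute[OF S(1), of "matrix_inv S *v x" v]
    by (simp add: matrix_vector_mul_assoc matrix_inv_right[OF S(2)])
  also have "\<dots> \<le> norm (matrix_inv S *v x) * norm (S *v v)"
    by (rule norm_cauchy_schwarz)
  finally have cs: "x \<bullet> v \<le> norm (matrix_inv S *v x) * norm (S *v v)" .
  have "norm (S *v v) \<le> norm (matrix_inv S *v x)"
  proof (cases "S *v v = 0")
    case False
    have "norm (S *v v) * norm (S *v v) \<le> norm (matrix_inv S *v x) * norm (S *v v)"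
      using Sv_le cs by (simp add: power2_eq_square)
    then show ?thesis
      using False by (simp add: mult_right_le_imp_le)
  qed simp
  then have "x \<bullet> v \<le> norm (matrix_inv S *v x) * norm (matrix_inv S *v x)"
    using cs by (meson mult_left_mono norm_ge_zero order_trans)
  then show "x \<bullet> (matrix_inv (S ** S + B) *v x) \<le> (norm (matrix_inv S *v x))\<^sup>2"
    by (simp add: v_def power2_eq_square)
qed

lemma gauss_lik_pos:
  assumes "det C \<noteq> 0"
  shows "0 < gauss_lik C r"
  using assms by (simp add: gauss_lik_def)

lemma gauss_lik_le_mode:
  fixes C0 C :: "real^'m^'m"
  assumes "0 < det C0" "det C0 \<le> det C"
  shows "gauss_lik C r \<le> gauss_lik C0 0"
proof -
  have "det C powr (- 1 / 2) * exp (- (1 / 2) * (wnorm (matrix_inv C) r)\<^sup>2)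
      \<le> det C0 powr (- 1 / 2) * 1"
    using assms by (intro mult_mono powr_mono2') auto
  then show ?thesis
    by (simp add: gauss_lik_def wnorm_def mult.assoc)
qed

lemma gauss_lik_le_perturbed:
  fixes S G :: "real^'m^'m"
  assumes S: "transpose S = S" "invertible S"
    and G: "transpose G = G" "\<And>x. 0 \<le> x \<bullet> (G *v x)"
  shows "gauss_lik (S ** S) r
    \<le> gauss_lik (S ** S + G) (r - d)
       * exp (1 / 2 * trace (matrix_inv (S ** S) ** G)
              + phi ((wnorm (matrix_inv (S ** S)) d)\<^sup>2) (wnorm (matrix_inv (S ** S)) r))"
proof -
  define k :: real where "k = (2 * pi) powr (- real CARD('m) / 2)"
  define a where "a = det (S ** S)"
  define b where "b = det (S ** S + G)"
  define t where "t = trace (matrix_inv (S ** S) ** G)"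
  define s where "s = norm (matrix_inv S *v r)"
  define e where "e = norm (matrix_inv S *v d)"
  define q where "q = (r - d) \<bullet> (matrix_inv (S ** S + G) *v (r - d))"
  have wn: "wnorm (matrix_inv (S ** S)) x = norm (matrix_inv S *v x)" for x
    using wnorm_matrix_inv_square[OF S] .
  have "0 < a" "a \<le> b" "b \<le> a * exp t"
    using det_square_pos[OF S(2)] det_add_psd_bounds[OF S G] by (simp_all add: a_def b_def t_def)
  then have "ln b \<le> ln (a * exp t)"
    by simp
  then have ln_b: "ln b \<le> ln a + t"
    using \<open>0 < a\<close> by (simp add: ln_mult)
  have "norm (matrix_inv S *v (r - d)) \<le> s + e"
    unfolding s_def e_def by (metis matrix_vector_mult_diff_distrib norm_triangle_ineq4)
  then have "(norm (matrix_inv S *v (r - d)))\<^sup>2 \<le> (s + e)\<^sup>2"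
    by (simp add: power_mono)
  then have q_le: "q \<le> s\<^sup>2 + 2 * s * e + e\<^sup>2"
    using inner_matrix_inv_add_psd_bounds(2)[OF S G, of "r - d"] by (simp add: q_def power2_sum)
  have "gauss_lik (S ** S) r = k * exp (- (1 / 2) * ln a + - (1 / 2) * s\<^sup>2)"
    using \<open>0 < a\<close> by (simp add: gauss_lik_def wn k_def a_def s_def powr_def mult_exp_exp mult.assoc)
  also have "\<dots> \<le> k * exp (- (1 / 2) * ln b + - (1 / 2) * q + (1 / 2 * t + (e\<^sup>2 / 2 + s * e)))"
    using ln_b q_le by (simp add: k_def)
  also have "\<dots> = gauss_lik (S ** S + G) (r - d) * exp (1 / 2 * t + phi (e\<^sup>2) s)"
    using \<open>0 < a\<close> \<open>a \<le> b\<close> inner_matrix_inv_add_psd_bounds(1)[OF S G, of "r - d"]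
      norm_ge_zero[of "matrix_inv S *v d"]
    by (simp add: gauss_lik_def wnorm_def phi_def k_def b_def q_def e_def powr_def
        mult_exp_exp mult.assoc)
  finally show ?thesis
    by (simp add: t_def wn s_def e_def)
qed

section \<open>Measurability of Gaussian likelihoods\<close>

lemma continuous_on_det [continuous_intros]:
  fixes f :: "'a::topological_space \<Rightarrow> real^'n^'n"
  shows "continuous_on S f \<Longrightarrow> continuous_on S (\<lambda>x. det (f x))"
  unfolding det_def by (intro continuous_intros)

lemma borel_measurable_det [measurable]:
  fixes f :: "'a \<Rightarrow> real^'n^'n"
  assumes "f \<in> borel_measurable M"
  shows "(\<lambda>x. det (f x)) \<in> borel_measurable M"
  using borel_measurable_continuous_on[OF continuous_on_det[OF continuous_on_id] assms] by simp

lemma matrix_inv_mult_vector_cramer: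
  fixes C :: "real^'n^'n"
  assumes "det C \<noteq> 0"
  shows "matrix_inv C *v r = (\<chi> k. det (\<chi> i j. if j = k then r $ i else C $ i $ j) / det C)"
proof -
  have "C *v (matrix_inv C *v r) = r"
    using assms by (simp add: matrix_vector_mul_assoc matrix_inv_right invertible_det_nz)
  then show ?thesis
    using cramer[OF assms] by blast
qed

lemma borel_measurable_gauss_lik:
  fixes C :: "'a \<Rightarrow> real^'m^'m" and r :: "'a \<Rightarrow> real^'m"
  assumes C_meas: "C \<in> borel_measurable M" and r_meas: "r \<in> borel_measurable M"
    and det: "\<And>p. p \<in> space M \<Longrightarrow> det (C p) \<noteq> 0"
  shows "(\<lambda>p. gauss_lik (C p) (r p)) \<in> borel_measurable M"
proof -
  \<comment> \<open>matrix_inv is a choice function; Cramer's rule makes it explicit on invertible matrices\<close>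
  define col :: "'m \<Rightarrow> 'a \<Rightarrow> real^'m^'m"
    where "col k p = (\<chi> i j. if j = k then r p $ i else C p $ i $ j)" for k p
  have col_meas: "col k \<in> borel_measurable M" for k
  proof -
    have "continuous_on UNIV
        (\<lambda>z::(real^'m^'m) \<times> (real^'m). if j = k then snd z $ i else fst z $ i $ j)" for i j
      by (cases "j = k") (simp_all add: continuous_on_component continuous_on_fst continuous_on_snd)
    then have "continuous_on UNIV (\<lambda>z::(real^'m^'m) \<times> (real^'m).
        (\<chi> i j. if j = k then snd z $ i else fst z $ i $ j) :: real^'m^'m)"
      by (intro continuous_on_vec_lambda)
    from borel_measurable_continuous_on[OF this borel_measurable_Pair[OF C_meas r_meas]]
    show ?thesis
      unfolding col_def[abs_def] fst_conv snd_conv .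
  qed
  have r_comp: "(\<lambda>p. r p $ k) \<in> borel_measurable M" for k
    using borel_measurable_continuous_on[OF continuous_on_component[OF continuous_on_id] r_meas]
    by simp
  have g_meas: "(\<lambda>p. (2 * pi) powr (- real CARD('m) / 2) * det (C p) powr (- 1 / 2)
      * exp (- (1 / 2) * (sqrt (\<Sum>k\<in>UNIV. r p $ k * (det (col k p) / det (C p))))\<^sup>2))
      \<in> borel_measurable M"
    by (intro borel_measurable_times borel_measurable_const powr_real_measurable
        borel_measurable_det borel_measurable_sum borel_measurable_divide borel_measurable_power
        measurable_compose[OF _ borel_measurable_exp] measurable_compose[OF _ borel_measurable_sqrt]
        C_meas col_meas r_comp)
  have eq: "gauss_lik (C p) (r p) = (2 * pi) powr (- real CARD('m) / 2) * det (C p) powr (- 1 / 2)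
      * exp (- (1 / 2) * (sqrt (\<Sum>k\<in>UNIV. r p $ k * (det (col k p) / det (C p))))\<^sup>2)"
    if "p \<in> space M" for p
    using det[OF that] matrix_inv_mult_vector_cramer[of "C p" "r p"]
    by (simp add: gauss_lik_def wnorm_def inner_vec_def col_def)
  show ?thesis
    by (rule measurable_cong[THEN iffD2, OF _ g_meas]) (rule eq)
qed

section \<open>Evidences and posteriors\<close>

lemma set_integral_mult_pos:
  fixes w L :: "'a \<Rightarrow> real"
  assumes \<Omega>: "\<Omega> \<in> sets M"
    and w_nonneg: "\<And>p. p \<in> \<Omega> \<Longrightarrow> 0 \<le> w p" and w_int: "set_integrable M \<Omega> w"
    and w_pos: "0 < (LINT p:\<Omega>|M. w p)"
    and L_meas: "L \<in> borel_measurable (restrict_space M \<Omega>)"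
    and L_pos: "\<And>p. p \<in> \<Omega> \<Longrightarrow> 0 < L p" and L_le: "\<And>p. p \<in> \<Omega> \<Longrightarrow> L p \<le> c"
  shows "0 < (LINT p:\<Omega>|M. w p * L p)"
proof -
  define F where "F = (\<lambda>x. indicator \<Omega> x *\<^sub>R (w x * L x))"
  have "(\<lambda>x. indicator \<Omega> x *\<^sub>R w x) \<in> borel_measurable M"
    using w_int unfolding set_integrable_def by (rule borel_measurable_integrable)
  moreover have "(\<lambda>x. indicator \<Omega> x *\<^sub>R L x) \<in> borel_measurable M"
    using L_meas \<Omega> by (simp add: borel_measurable_restrict_space_iff)
  ultimately have prod_meas:
      "(\<lambda>x. (indicator \<Omega> x *\<^sub>R w x) * (indicator \<Omega> x *\<^sub>R L x)) \<in> borel_measurable M"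
    by (rule borel_measurable_times)
  have meas: "set_borel_measurable M \<Omega> (\<lambda>p. w p * L p)"
    unfolding set_borel_measurable_def
    by (rule measurable_cong[THEN iffD1, OF _ prod_meas]) (auto simp: indicator_def)
  have "set_integrable M \<Omega> (\<lambda>p. w p * L p)"
  proof (rule set_integrable_bound[OF _ meas])
    show "set_integrable M \<Omega> (\<lambda>p. \<bar>c\<bar> * w p)"
      using w_int by simp
    have "norm (w p * L p) \<le> norm (\<bar>c\<bar> * w p)" if "p \<in> \<Omega>" for p
      using w_nonneg[OF that] L_pos[OF that] L_le[OF that]
      by (simp add: abs_mult mult.commute[of c] mult_left_mono)
    then show "AE p in M. p \<in> \<Omega> \<longrightarrow> norm (w p * L p) \<le> norm (\<bar>c\<bar> * w p)"
      by (intro AE_I2) blast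
  qed
  then have "integrable M F"
    by (simp add: F_def set_integrable_def)
  have F_nonneg: "AE x in M. 0 \<le> F x"
    using w_nonneg L_pos by (intro AE_I2) (auto simp: F_def indicator_def less_imp_le)
  have "integral\<^sup>L M F \<noteq> 0"
  proof
    assume "integral\<^sup>L M F = 0"
    then have "AE x in M. F x = 0"
      using integral_nonneg_eq_0_iff_AE[OF \<open>integrable M F\<close> F_nonneg] by simp
    then have "AE x in M. indicator \<Omega> x *\<^sub>R w x = 0"
      by eventually_elim (use L_pos in \<open>fastforce simp: F_def indicator_def split: if_splits\<close>)
    then have "(LINT p:\<Omega>|M. w p) = 0"
      unfolding set_lebesgue_integral_def by (simp add: integral_eq_zero_AE)
    with w_pos show False by simp
  qed
  moreover have "0 \<le> integral\<^sup>L M F"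
    using F_nonneg by (rule integral_nonneg_AE)
  ultimately show ?thesis
    by (simp add: F_def set_lebesgue_integral_def)
qed

lemma evidenceD_pos:
  fixes \<Omega> :: "'d::euclidean_space set" and \<Sigma> :: "real^'m^'m"
  assumes \<Omega>: "\<Omega> \<in> sets lborel"
    and prior_nonneg: "\<And>p. p \<in> \<Omega> \<Longrightarrow> 0 \<le> prior p" and prior_int: "set_integrable lborel \<Omega> prior"
    and prior_pos: "0 < (LINT p:\<Omega>|lborel. prior p)"
    and ybar_meas: "set_borel_measurable lborel \<Omega> ybar"
    and \<Gamma>_meas: "set_borel_measurable lborel \<Omega> \<Gamma>"
    and \<Sigma>: "transpose \<Sigma> = \<Sigma>" "invertible \<Sigma>"
    and \<Gamma>: "\<And>p. p \<in> \<Omega> \<Longrightarrow> transpose (\<Gamma> p) = \<Gamma> p" "\<And>p x. p \<in> \<Omega> \<Longrightarrow> 0 \<le> x \<bullet> (\<Gamma> p *v x)"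
  shows "0 < evidenceD \<Omega> prior \<Sigma> ybar \<Gamma> ym"
proof -
  let ?N = "restrict_space lborel \<Omega>"
  have "ybar \<in> borel_measurable ?N" "\<Gamma> \<in> borel_measurable ?N"
    using ybar_meas \<Gamma>_meas \<Omega>
    by (simp_all add: set_borel_measurable_def borel_measurable_restrict_space_iff)
  then have meas: "(\<lambda>p. \<Sigma> ** \<Sigma> + \<Gamma> p) \<in> borel_measurable ?N"
      "(\<lambda>p. ym - ybar p) \<in> borel_measurable ?N"
    by simp_all
  have det: "0 < det (\<Sigma> ** \<Sigma>)" "det (\<Sigma> ** \<Sigma>) \<le> det (\<Sigma> ** \<Sigma> + \<Gamma> p)" if "p \<in> \<Omega>" for p
    using det_square_pos[OF \<Sigma>(2)] det_add_psd_bounds(1)[OF \<Sigma> \<Gamma>[OF that]] by auto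
  then have det_nonzero: "det (\<Sigma> ** \<Sigma> + \<Gamma> p) \<noteq> 0" if "p \<in> \<Omega>" for p
    using that by fastforce
  show ?thesis
    unfolding evidenceD_def likD_def
  proof (rule set_integral_mult_pos[OF \<Omega> prior_nonneg prior_int prior_pos])
    show "(\<lambda>p. gauss_lik (\<Sigma> ** \<Sigma> + \<Gamma> p) (ym - ybar p)) \<in> borel_measurable ?N"
      using det_nonzero by (intro borel_measurable_gauss_lik meas) (auto simp: space_restrict_space)
    show "0 < gauss_lik (\<Sigma> ** \<Sigma> + \<Gamma> p) (ym - ybar p)" if "p \<in> \<Omega>" for p
      using det_nonzero[OF that] by (rule gauss_lik_pos)
    show "gauss_lik (\<Sigma> ** \<Sigma> + \<Gamma> p) (ym - ybar p) \<le> gauss_lik (\<Sigma> ** \<Sigma>) 0" if "p \<in> \<Omega>" for p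
      using det[OF that] by (rule gauss_lik_le_mode)
  qed
qed

lemma evidence_eq_evidenceD_zero:
  "evidence \<Omega> prior \<Sigma> y ym = evidenceD \<Omega> prior \<Sigma> y (\<lambda>_. 0) ym"
  by (simp add: evidence_def evidenceD_def lik_def likD_def)

lemma posterior_le_posteriorD_exp_psi:
  fixes \<Sigma> :: "real^'m^'m"
  assumes Z: "0 < evidence \<Omega> prior \<Sigma> y ym" and ZD: "0 < evidenceD \<Omega> prior \<Sigma> ybar \<Gamma> ym"
    and evid_bound: "evidenceD \<Omega> prior \<Sigma> ybar \<Gamma> ym \<le> \<alpha> * evidence \<Omega> prior \<Sigma> y ym"
    and prior: "0 \<le> prior p"
    and \<Sigma>: "transpose \<Sigma> = \<Sigma>" "invertible \<Sigma>"
    and \<Gamma>: "transpose (\<Gamma> p) = \<Gamma> p" "\<And>x. 0 \<le> x \<bullet> (\<Gamma> p *v x)"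
  shows "posterior \<Omega> prior \<Sigma> y ym p
    \<le> posteriorD \<Omega> prior \<Sigma> ybar \<Gamma> ym p * exp (psi \<Sigma> y ybar \<Gamma> \<alpha> ym p)"
proof -
  define Z where "Z = evidence \<Omega> prior \<Sigma> y ym"
  define ZD where "ZD = evidenceD \<Omega> prior \<Sigma> ybar \<Gamma> ym"
  define E where "E = exp (1 / 2 * trace (matrix_inv (\<Sigma> ** \<Sigma>) ** \<Gamma> p)
      + phi ((wnorm (matrix_inv (\<Sigma> ** \<Sigma>)) (ybar p - y p))\<^sup>2)
            (wnorm (matrix_inv (\<Sigma> ** \<Sigma>)) (ym - y p)))"
  have "0 < \<alpha> * Z"
    using ZD evid_bound by (simp add: Z_def)
  then have "0 < \<alpha>"
    using Z by (simp add: Z_def zero_less_mult_iff)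
  then have exp_psi: "exp (psi \<Sigma> y ybar \<Gamma> \<alpha> ym p) = E * \<alpha>"
    by (simp add: psi_def E_def exp_add)
  have "lik \<Sigma> y ym p \<le> likD \<Sigma> ybar \<Gamma> ym p * E"
    using gauss_lik_le_perturbed[OF \<Sigma> \<Gamma>, of "ym - y p" "ybar p - y p"]
    by (simp add: lik_def likD_def E_def)
  then have "posterior \<Omega> prior \<Sigma> y ym p \<le> prior p * likD \<Sigma> ybar \<Gamma> ym p * E / Z"
    using prior Z by (simp add: posterior_def Z_def divide_right_mono mult_left_mono mult.assoc)
  also have "\<dots> \<le> prior p * likD \<Sigma> ybar \<Gamma> ym p * E * \<alpha> / ZD"
  proof -
    have "0 \<le> prior p * likD \<Sigma> ybar \<Gamma> ym p * E"
      using prior by (simp add: likD_def gauss_lik_def E_def)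
    moreover have "1 / Z \<le> \<alpha> / ZD"
      using Z ZD evid_bound by (simp add: Z_def ZD_def divide_simps mult.commute)
    ultimately show ?thesis
      by (metis mult_left_mono times_divide_eq_right mult_1_right)
  qed
  also have "\<dots> = posteriorD \<Omega> prior \<Sigma> ybar \<Gamma> ym p * exp (psi \<Sigma> y ybar \<Gamma> \<alpha> ym p)"
    by (simp add: posteriorD_def ZD_def exp_psi)
  finally show ?thesis .
qed

theorem corollary1:
  fixes \<Omega> :: "(real^'d) set"
    and y ybar :: "real^'d \<Rightarrow> real^'m"
    and \<Gamma> :: "real^'d \<Rightarrow> real^'m^'m"
    and prior :: "real^'d \<Rightarrow> real"
    and ym :: "real^'m"
    and \<Sigma> :: "real^'m^'m"
    and \<alpha> :: real
  assumes \<Omega>_meas: "\<Omega> \<in> sets lborel"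
    and prior_nonneg: "\<And>p. p \<in> \<Omega> \<Longrightarrow> 0 \<le> prior p"
    and prior_int: "set_integrable lborel \<Omega> prior"
    and prior_one: "(LINT p:\<Omega>|lborel. prior p) = 1"
    and y_meas: "set_borel_measurable lborel \<Omega> y"
    and ybar_meas: "set_borel_measurable lborel \<Omega> ybar"
    and \<Gamma>_meas: "set_borel_measurable lborel \<Omega> \<Gamma>"
    and \<Sigma>_sym: "transpose \<Sigma> = \<Sigma>"
    and \<Sigma>_pd: "\<And>x. x \<noteq> 0 \<Longrightarrow> 0 < x \<bullet> (\<Sigma> *v x)"
    and \<Gamma>_sym: "\<And>p. p \<in> \<Omega> \<Longrightarrow> transpose (\<Gamma> p) = \<Gamma> p"
    and \<Gamma>_psd: "\<And>p x. p \<in> \<Omega> \<Longrightarrow> 0 \<le> x \<bullet> (\<Gamma> p *v x)"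
    and evid_bound: "evidenceD \<Omega> prior \<Sigma> ybar \<Gamma> ym \<le> \<alpha> * evidence \<Omega> prior \<Sigma> y ym"
  shows "(\<integral>\<^sup>+ p \<in> \<Omega>. ennreal (posterior \<Omega> prior \<Sigma> y ym p * (norm (y p - ybar p))\<^sup>2) \<partial>lborel)
         \<le> (\<integral>\<^sup>+ p \<in> \<Omega>. ennreal (posteriorD \<Omega> prior \<Sigma> ybar \<Gamma> ym p * (norm (y p - ybar p))\<^sup>2
                                  * exp (psi \<Sigma> y ybar \<Gamma> \<alpha> ym p)) \<partial>lborel)"
proof -
  have \<Sigma>: "transpose \<Sigma> = \<Sigma>" "invertible \<Sigma>"
    using \<Sigma>_sym pos_def_matrix_invertible[OF \<Sigma>_pd] by auto
  have prior_pos: "0 < (LINT p:\<Omega>|lborel. prior p)"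
    using prior_one by simp
  have ZD: "0 < evidenceD \<Omega> prior \<Sigma> ybar \<Gamma> ym"
    by (rule evidenceD_pos[OF \<Omega>_meas prior_nonneg prior_int prior_pos ybar_meas \<Gamma>_meas
          \<Sigma> \<Gamma>_sym \<Gamma>_psd])
  have Z: "0 < evidence \<Omega> prior \<Sigma> y ym"
    unfolding evidence_eq_evidenceD_zero
    by (rule evidenceD_pos[OF \<Omega>_meas prior_nonneg prior_int prior_pos y_meas _ \<Sigma>])
      (simp_all add: set_borel_measurable_def transpose_def vec_eq_iff)
  have "posterior \<Omega> prior \<Sigma> y ym p * (norm (y p - ybar p))\<^sup>2
      \<le> posteriorD \<Omega> prior \<Sigma> ybar \<Gamma> ym p * (norm (y p - ybar p))\<^sup>2 * exp (psi \<Sigma> y ybar \<Gamma> \<alpha> ym p)"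
    if "p \<in> \<Omega>" for p
    using mult_right_mono[OF posterior_le_posteriorD_exp_psi[OF Z ZD evid_bound
          prior_nonneg[OF that] \<Sigma> \<Gamma>_sym[OF that] \<Gamma>_psd[OF that]]
        zero_le_power2[of "norm (y p - ybar p)"]]
    by (simp add: ac_simps)
  then show ?thesis
    by (intro nn_integral_mono) (auto split: split_indicator intro!: ennreal_leI)
qed

end
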